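(* Let $t\in\mathbb C\setminus\{0,-1,-2,\dots\}$ and let $(m_{p,q})_{p,q\ge0}$ be complex numbers satisfying $$m_{p+1,q}+m_{p,q+1}-(p+q+1)m_{p,q}=m_{p,0}\,m_{0,q}\quad(p,q=0,1,2,\dots),\qquad m_{0,0}=t.$$ For a Young diagram $\lambda=(p_1,\dots,p_d\,|\,q_1,\dots,q_d)$ with $n=|\lambda|$ set $$\varphi(\lambda)=\frac{\det[m_{p_i,q_j}]_{i,j=1}^d}{t(t+1)\cdots(t+n-1)}$$ (with $\varphi(\varnothing)=1$). Then $\varphi$ is harmonic on the Young graph: $\varphi(\lambda)=\sum_{\nu:\ \nu\searrow\lambda}\varphi(\nu)$ for every Young diagram $\lambda$.
   Context: Frobenius notation: for a Young diagram $\lambda$, $d$ is the number of diagonal boxes, $p_i=\lambda_i-i$ and $q_i=\lambda'_i-i$ ($1\le i\le d$), where $\lambda'$ is the transposed diagram; $|\lambda|=\sum_i(p_i+q_i+1)$ is the number of boxes. $\nu\searrow\lambda$ means that $\nu$ is a Young diagram obtained from $\lambda$ by adding one box. *)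

theory Defs
  imports Complex_Main "Jordan_Normal_Form.Determinant"
begin

text \<open>Young diagrams as lists of row lengths (weakly decreasing, positive).\<close>
definition young :: "nat list \<Rightarrow> bool" where
  "young l \<longleftrightarrow> sorted_wrt (\<ge>) l \<and> (\<forall>x\<in>set l. 0 < x)"

text \<open>Row length lambda_i, 1-based (0 beyond the last row).\<close>
definition row :: "nat list \<Rightarrow> nat \<Rightarrow> nat" where
  "row l i = (if 1 \<le> i \<and> i \<le> length l then l ! (i - 1) else 0)"

definition col :: "nat list \<Rightarrow> nat \<Rightarrow> nat" where
  "col l j = card {i. 1 \<le> i \<and> i \<le> length l \<and> j \<le> row l i}"

definition nboxes :: "nat list \<Rightarrow> nat" where
  "nboxes l = sum_list l"

definition frob_d :: "nat list \<Rightarrow> nat" where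
  "frob_d l = card {i. 1 \<le> i \<and> i \<le> length l \<and> i \<le> row l i}"

definition frob_p :: "nat list \<Rightarrow> nat \<Rightarrow> nat" where
  "frob_p l i = row l i - i"

definition frob_q :: "nat list \<Rightarrow> nat \<Rightarrow> nat" where
  "frob_q l i = col l i - i"

definition adds_box :: "nat list \<Rightarrow> nat list \<Rightarrow> bool" where
  "adds_box l \<nu> \<longleftrightarrow> young \<nu> \<and> (\<forall>i. row l i \<le> row \<nu> i) \<and> nboxes \<nu> = nboxes l + 1"

definition phi :: "(nat \<Rightarrow> nat \<Rightarrow> complex) \<Rightarrow> complex \<Rightarrow> nat list \<Rightarrow> complex" where
  "phi m t l = det (mat (frob_d l) (frob_d l)
        (\<lambda>(i, j). m (frob_p l (i + 1)) (frob_q l (j + 1)))) / pochhammer t (nboxes l)"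

end

theory Submission
  imports Defs
begin

text \<open>Write M = [m (p i) (q j)] for the Frobenius coordinates of l, so that phi l = det M / (t)_n.
  A diagram obtained by adding a box at an addable corner (r, c) has a determinant of one of three
  shapes: if r \<le> d the box lengthens the arm p r, if c \<le> d it lengthens the leg q c, and otherwise
  it is the new diagonal box (d + 1, d + 1), which borders M by the row m 0 (q j), the column
  m (p i) 0 and the corner m 0 0 = t. Shifting p i or q j at a position that is not addable produces
  two equal rows or columns, so the sum over all added boxes is the sum of all 2 d + 1 shifted
  determinants. Expanding them along the cofactors of M and applying the recurrence to
  m (p + 1) q + m p (q + 1) collapses the sum to (\<Sum>i. p i + q i + 1) det M + t det M = (n + t) det M,
  and (t)_(n+1) = (t + n) (t)_n.\<close>

section \<open>Determinant identities\<close>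

lemma det_replace_row:
  fixes f :: "nat \<Rightarrow> nat \<Rightarrow> 'a :: comm_ring_1"
  assumes "i < d"
  shows "det (mat d d (\<lambda>(a,b). if a = i then x b else f a b))
       = (\<Sum>b<d. x b * cofactor (mat d d (\<lambda>(a,b). f a b)) i b)"
proof -
  let ?B = "mat d d (\<lambda>(a,b). if a = i then x b else f a b)"
  let ?A = "mat d d (\<lambda>(a,b). f a b)"
  have "det ?B = (\<Sum>b<d. ?B $$ (i,b) * cofactor ?B i b)"
    by (rule laplace_expansion_row[OF _ assms]) auto
  also have "\<dots> = (\<Sum>b<d. x b * cofactor ?A i b)"
  proof (rule sum.cong[OF refl])
    fix b assume b: "b \<in> {..<d}"
    have "mat_delete ?B i b = mat_delete ?A i b"
      by (rule eq_matI) (auto simp: mat_delete_def)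
    then show "?B $$ (i,b) * cofactor ?B i b = x b * cofactor ?A i b"
      using b assms by (simp add: cofactor_def)
  qed
  finally show ?thesis .
qed

lemma det_replace_col:
  fixes f :: "nat \<Rightarrow> nat \<Rightarrow> 'a :: comm_ring_1"
  assumes "j < d"
  shows "det (mat d d (\<lambda>(a,b). if b = j then y a else f a b))
       = (\<Sum>a<d. y a * cofactor (mat d d (\<lambda>(a,b). f a b)) a j)"
proof -
  let ?B = "mat d d (\<lambda>(a,b). if b = j then y a else f a b)"
  let ?A = "mat d d (\<lambda>(a,b). f a b)"
  have "det ?B = (\<Sum>a<d. ?B $$ (a,j) * cofactor ?B a j)"
    by (rule laplace_expansion_column[OF _ assms]) auto
  also have "\<dots> = (\<Sum>a<d. y a * cofactor ?A a j)"
  proof (rule sum.cong[OF refl])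
    fix a assume a: "a \<in> {..<d}"
    have "mat_delete ?B a j = mat_delete ?A a j"
      by (rule eq_matI) (auto simp: mat_delete_def)
    then show "?B $$ (a,j) * cofactor ?B a j = y a * cofactor ?A a j"
      using a assms by (simp add: cofactor_def)
  qed
  finally show ?thesis .
qed

definition border_mat :: "nat \<Rightarrow> (nat \<Rightarrow> nat \<Rightarrow> 'a) \<Rightarrow> (nat \<Rightarrow> 'a) \<Rightarrow> (nat \<Rightarrow> 'a) \<Rightarrow> 'a \<Rightarrow> 'a mat"
  where "border_mat d f u v c = mat (Suc d) (Suc d) (\<lambda>(a,b).
    if a < d \<and> b < d then f a b else if a < d then u a else if b < d then v b else c)"

lemma cofactor_border_mat_last_row:
  fixes f :: "nat \<Rightarrow> nat \<Rightarrow> 'a :: comm_ring_1"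
  assumes b: "b < d"
  shows "cofactor (border_mat d f u v c) d b
       = - (\<Sum>a<d. u a * cofactor (mat d d (\<lambda>(a,b). f a b)) a b)"
proof -
  let ?A = "mat d d (\<lambda>(a,b). f a b)"
  define K where "K = mat_delete (border_mat d f u v c) d b"
  have K: "K \<in> carrier_mat d d"
    by (simp add: K_def border_mat_def mat_delete_def)
  have last: "d - 1 < d" using b by simp
  \<comment> \<open>Deleting column b moves the border column u to position d - 1 of K.\<close>
  have "det K = (\<Sum>a<d. K $$ (a, d - 1) * cofactor K a (d - 1))"
    by (rule laplace_expansion_column[OF K last])
  also have "\<dots> = (\<Sum>a<d. u a * ((-1) ^ (a + (d - 1)) * det (mat_delete ?A a b)))"
  proof (rule sum.cong[OF refl])
    fix a assume a: "a \<in> {..<d}"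
    have "mat_delete K a (d - 1) = mat_delete ?A a b"
      using b by (intro eq_matI) (auto simp: mat_delete_def K_def border_mat_def)
    moreover have "K $$ (a, d - 1) = u a"
      using a b by (auto simp: K_def mat_delete_def border_mat_def)
    ultimately show "K $$ (a, d - 1) * cofactor K a (d - 1)
        = u a * ((-1) ^ (a + (d - 1)) * det (mat_delete ?A a b))"
      by (simp add: cofactor_def)
  qed
  finally have det_K: "det K = \<dots>" .
  have sign: "(-1::'a) ^ (d + b) * (-1) ^ (a + (d - 1)) = - ((-1) ^ (a + b))" for a
  proof -
    obtain e where e: "d = Suc e" using b by (cases d) auto
    have "(-1::'a) ^ (d + b) * (-1) ^ (a + (d - 1)) = (-1) ^ (d + b + (a + (d - 1)))"
      by (simp only: power_add)
    also have "d + b + (a + (d - 1)) = Suc (2 * e + (a + b))"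
      using e by simp
    finally show ?thesis by (simp add: power_add power_mult)
  qed
  have "cofactor (border_mat d f u v c) d b = (-1) ^ (d + b) * det K"
    by (simp add: cofactor_def K_def)
  also have "\<dots> = (\<Sum>a<d. u a * (((-1) ^ (d + b) * (-1) ^ (a + (d - 1))) * det (mat_delete ?A a b)))"
    unfolding det_K by (simp add: sum_distrib_left mult_ac)
  also have "\<dots> = - (\<Sum>a<d. u a * cofactor ?A a b)"
    unfolding sign by (simp add: cofactor_def sum_negf)
  finally show ?thesis .
qed

lemma det_border_mat:
  fixes f :: "nat \<Rightarrow> nat \<Rightarrow> 'a :: comm_ring_1"
  shows "det (border_mat d f u v c)
       = c * det (mat d d (\<lambda>(a,b). f a b))
         - (\<Sum>a<d. \<Sum>b<d. u a * v b * cofactor (mat d d (\<lambda>(a,b). f a b)) a b)"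
proof -
  let ?N = "border_mat d f u v c" and ?A = "mat d d (\<lambda>(a,b). f a b)"
  have "det ?N = (\<Sum>b<Suc d. ?N $$ (d,b) * cofactor ?N d b)"
    by (rule laplace_expansion_row) (auto simp: border_mat_def)
  also have "\<dots> = (\<Sum>b<d. v b * cofactor ?N d b) + c * cofactor ?N d d"
    by (simp add: border_mat_def)
  also have "cofactor ?N d d = det ?A"
  proof -
    have "mat_delete ?N d d = ?A"
      by (rule eq_matI) (auto simp: mat_delete_def border_mat_def)
    then show ?thesis by (simp add: cofactor_def)
  qed
  also have "(\<Sum>b<d. v b * cofactor ?N d b) = - (\<Sum>b<d. \<Sum>a<d. u a * v b * cofactor ?A a b)"
    by (simp add: cofactor_border_mat_last_row sum_distrib_left sum_negf mult_ac)
  also have "(\<Sum>b<d. \<Sum>a<d. u a * v b * cofactor ?A a b) = (\<Sum>a<d. \<Sum>b<d. u a * v b * cofactor ?A a b)"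
    by (rule sum.swap)
  finally show ?thesis by simp
qed

lemma sum_weighted_cofactors:
  fixes f :: "nat \<Rightarrow> nat \<Rightarrow> 'a :: comm_ring_1" and d :: nat
  defines "A \<equiv> mat d d (\<lambda>(a,b). f a b)"
  shows "(\<Sum>a<d. \<Sum>b<d. (x a + y b + 1) * f a b * cofactor A a b)
       = ((\<Sum>a<d. x a) + (\<Sum>b<d. y b) + of_nat d) * det A"
proof -
  have A: "A \<in> carrier_mat d d" by (simp add: A_def)
  have row_expansion: "(\<Sum>b<d. f a b * cofactor A a b) = det A" if "a < d" for a
    using laplace_expansion_row[OF A that] that by (simp add: A_def)
  have col_expansion: "(\<Sum>a<d. f a b * cofactor A a b) = det A" if "b < d" for b
    using laplace_expansion_column[OF A that] that by (simp add: A_def)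
  have "(\<Sum>a<d. \<Sum>b<d. (x a + y b + 1) * f a b * cofactor A a b)
      = (\<Sum>a<d. \<Sum>b<d. x a * (f a b * cofactor A a b))
        + (\<Sum>a<d. \<Sum>b<d. y b * (f a b * cofactor A a b))
        + (\<Sum>a<d. \<Sum>b<d. f a b * cofactor A a b)"
    by (simp add: algebra_simps sum.distrib)
  also have "(\<Sum>a<d. \<Sum>b<d. y b * (f a b * cofactor A a b))
      = (\<Sum>b<d. y b * (\<Sum>a<d. f a b * cofactor A a b))"
    by (subst sum.swap) (simp add: sum_distrib_left)
  also have "(\<Sum>a<d. \<Sum>b<d. x a * (f a b * cofactor A a b))
      = (\<Sum>a<d. x a * (\<Sum>b<d. f a b * cofactor A a b))"
    by (simp add: sum_distrib_left)
  also have "\<dots> + (\<Sum>b<d. y b * (\<Sum>a<d. f a b * cofactor A a b))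
        + (\<Sum>a<d. \<Sum>b<d. f a b * cofactor A a b)
      = (\<Sum>a<d. x a * det A) + (\<Sum>b<d. y b * det A) + of_nat d * det A"
    by (simp add: row_expansion col_expansion)
  also have "\<dots> = ((\<Sum>a<d. x a) + (\<Sum>b<d. y b) + of_nat d) * det A"
    by (simp add: sum_distrib_right distrib_right)
  finally show ?thesis .
qed

lemmas sum_atLeast1_atMost_shift = sum.atLeast1_atMost_eq[folded One_nat_def]

definition frob_mat :: "(nat \<Rightarrow> nat \<Rightarrow> 'a) \<Rightarrow> nat \<Rightarrow> (nat \<Rightarrow> nat) \<Rightarrow> (nat \<Rightarrow> nat) \<Rightarrow> 'a mat"
  where "frob_mat m k P Q = mat k k (\<lambda>(i,j). m (P (i + 1)) (Q (j + 1)))"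

lemma frob_mat_cong:
  assumes "\<And>i. 1 \<le> i \<Longrightarrow> i \<le> k \<Longrightarrow> P i = P' i" "\<And>j. 1 \<le> j \<Longrightarrow> j \<le> k \<Longrightarrow> Q j = Q' j"
  shows "frob_mat m k P Q = frob_mat m k P' Q'"
  by (rule eq_matI) (auto simp: frob_mat_def assms)

lemma sum_det_frob_mat_shift_rows:
  fixes m :: "nat \<Rightarrow> nat \<Rightarrow> 'a :: comm_ring_1"
  shows "(\<Sum>i\<in>{1..d}. det (frob_mat m d (P(i := P i + 1)) Q))
       = (\<Sum>a<d. \<Sum>b<d. m (P (a + 1) + 1) (Q (b + 1)) * cofactor (frob_mat m d P Q) a b)"
proof -
  have "det (frob_mat m d (P(Suc a := P (Suc a) + 1)) Q)
      = (\<Sum>b<d. m (P (a + 1) + 1) (Q (b + 1)) * cofactor (frob_mat m d P Q) a b)" if "a < d" for a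
  proof -
    have "frob_mat m d (P(Suc a := P (Suc a) + 1)) Q = mat d d (\<lambda>(i,j).
        if i = a then m (P (a + 1) + 1) (Q (j + 1)) else m (P (i + 1)) (Q (j + 1)))"
      by (rule eq_matI) (auto simp: frob_mat_def)
    then show ?thesis by (simp add: det_replace_row[OF that] frob_mat_def)
  qed
  then show ?thesis unfolding sum_atLeast1_atMost_shift by (intro sum.cong) auto
qed

lemma sum_det_frob_mat_shift_cols:
  fixes m :: "nat \<Rightarrow> nat \<Rightarrow> 'a :: comm_ring_1"
  shows "(\<Sum>j\<in>{1..d}. det (frob_mat m d P (Q(j := Q j + 1))))
       = (\<Sum>a<d. \<Sum>b<d. m (P (a + 1)) (Q (b + 1) + 1) * cofactor (frob_mat m d P Q) a b)"
proof -
  have "det (frob_mat m d P (Q(Suc b := Q (Suc b) + 1)))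
      = (\<Sum>a<d. m (P (a + 1)) (Q (b + 1) + 1) * cofactor (frob_mat m d P Q) a b)" if "b < d" for b
  proof -
    have "frob_mat m d P (Q(Suc b := Q (Suc b) + 1)) = mat d d (\<lambda>(i,j).
        if j = b then m (P (i + 1)) (Q (b + 1) + 1) else m (P (i + 1)) (Q (j + 1)))"
      by (rule eq_matI) (auto simp: frob_mat_def)
    then show ?thesis by (simp add: det_replace_col[OF that] frob_mat_def)
  qed
  then show ?thesis unfolding sum_atLeast1_atMost_shift by (subst sum.swap, intro sum.cong) auto
qed

lemma det_frob_mat_Suc:
  fixes m :: "nat \<Rightarrow> nat \<Rightarrow> 'a :: comm_ring_1"
  assumes "P (d + 1) = 0" "Q (d + 1) = 0"
  shows "det (frob_mat m (d + 1) P Q) = m 0 0 * det (frob_mat m d P Q)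
       - (\<Sum>a<d. \<Sum>b<d. m (P (a + 1)) 0 * m 0 (Q (b + 1)) * cofactor (frob_mat m d P Q) a b)"
proof -
  have border: "frob_mat m (d + 1) P Q = border_mat d (\<lambda>a b. m (P (a + 1)) (Q (b + 1)))
      (\<lambda>a. m (P (a + 1)) 0) (\<lambda>b. m 0 (Q (b + 1))) (m 0 0)"
    using assms by (intro eq_matI) (auto simp: frob_mat_def border_mat_def less_Suc_eq)
  show ?thesis unfolding border det_border_mat by (simp add: frob_mat_def)
qed

lemma det_frob_mat_recurrence:
  fixes m :: "nat \<Rightarrow> nat \<Rightarrow> 'a :: comm_ring_1"
  assumes rec: "\<And>p q. m (p + 1) q + m p (q + 1) = of_nat (p + q + 1) * m p q + m p 0 * m 0 q"
    and P: "P (d + 1) = 0" and Q: "Q (d + 1) = 0"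
  shows "(\<Sum>i\<in>{1..d}. det (frob_mat m d (P(i := P i + 1)) Q))
       + (\<Sum>j\<in>{1..d}. det (frob_mat m d P (Q(j := Q j + 1))))
       + det (frob_mat m (d + 1) P Q)
       = (of_nat (\<Sum>i\<in>{1..d}. P i + Q i + 1) + m 0 0) * det (frob_mat m d P Q)"
proof -
  let ?A = "frob_mat m d P Q"
  define x where "x a = (of_nat (P (a + 1)) :: 'a)" for a
  define y where "y b = (of_nat (Q (b + 1)) :: 'a)" for b
  have "m (P (a + 1) + 1) (Q (b + 1)) + m (P (a + 1)) (Q (b + 1) + 1)
      = (x a + y b + 1) * m (P (a + 1)) (Q (b + 1)) + m (P (a + 1)) 0 * m 0 (Q (b + 1))" for a b
    using rec[of "P (a + 1)" "Q (b + 1)"] by (simp add: x_def y_def add_ac)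
  then have "(\<Sum>a<d. \<Sum>b<d. m (P (a + 1) + 1) (Q (b + 1)) * cofactor ?A a b)
      + (\<Sum>a<d. \<Sum>b<d. m (P (a + 1)) (Q (b + 1) + 1) * cofactor ?A a b)
      = (\<Sum>a<d. \<Sum>b<d. (x a + y b + 1) * m (P (a + 1)) (Q (b + 1)) * cofactor ?A a b)
      + (\<Sum>a<d. \<Sum>b<d. m (P (a + 1)) 0 * m 0 (Q (b + 1)) * cofactor ?A a b)"
    by (simp add: sum.distrib[symmetric] distrib_right[symmetric])
  also have "(\<Sum>a<d. \<Sum>b<d. (x a + y b + 1) * m (P (a + 1)) (Q (b + 1)) * cofactor ?A a b)
      = ((\<Sum>a<d. x a) + (\<Sum>b<d. y b) + of_nat d) * det ?A"
    unfolding frob_mat_def by (rule sum_weighted_cofactors)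
  also have "(\<Sum>a<d. x a) + (\<Sum>b<d. y b) + of_nat d = of_nat (\<Sum>i\<in>{1..d}. P i + Q i + 1)"
    unfolding sum_atLeast1_atMost_shift by (simp add: sum.distrib x_def y_def)
  finally show ?thesis
    unfolding sum_det_frob_mat_shift_rows sum_det_frob_mat_shift_cols det_frob_mat_Suc[where P = P and Q = Q and d = d, OF P Q]
    by (simp add: algebra_simps)
qed

section \<open>Young diagrams by rows and columns\<close>

lemma row_pos_bounds: "0 < row l i \<Longrightarrow> 1 \<le> i \<and> i \<le> length l"
  by (auto simp: row_def split: if_splits)

lemma row_eq_0: "i = 0 \<or> length l < i \<Longrightarrow> row l i = 0"
  by (auto simp: row_def)

lemma young_iff_row: "young l \<longleftrightarrow>
   (\<forall>i j. 1 \<le> i \<longrightarrow> i \<le> j \<longrightarrow> j \<le> length l \<longrightarrow> row l j \<le> row l i) \<and>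
   (\<forall>i. 1 \<le> i \<longrightarrow> i \<le> length l \<longrightarrow> 0 < row l i)"
proof
  assume "young l"
  then have sorted: "sorted_wrt (\<ge>) l" and pos: "\<forall>x\<in>set l. 0 < x" by (auto simp: young_def)
  show "(\<forall>i j. 1 \<le> i \<longrightarrow> i \<le> j \<longrightarrow> j \<le> length l \<longrightarrow> row l j \<le> row l i) \<and>
      (\<forall>i. 1 \<le> i \<longrightarrow> i \<le> length l \<longrightarrow> 0 < row l i)"
  proof (intro conjI allI impI)
    fix i j assume "1 \<le> i" "i \<le> j" "j \<le> length l"
    then show "row l j \<le> row l i"
      using sorted by (cases "i = j") (auto simp: row_def sorted_wrt_iff_nth_less)
  next
    fix i assume "1 \<le> i" "i \<le> length l"
    then show "0 < row l i" using pos by (auto simp: row_def)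
  qed
next
  assume h: "(\<forall>i j. 1 \<le> i \<longrightarrow> i \<le> j \<longrightarrow> j \<le> length l \<longrightarrow> row l j \<le> row l i) \<and>
      (\<forall>i. 1 \<le> i \<longrightarrow> i \<le> length l \<longrightarrow> 0 < row l i)"
  have "sorted_wrt (\<ge>) l"
    unfolding sorted_wrt_iff_nth_less
  proof (intro allI impI)
    fix a b assume "a < b" "b < length l"
    then have "row l (b + 1) \<le> row l (a + 1)" using h by auto
    then show "l ! b \<le> l ! a" using \<open>a < b\<close> \<open>b < length l\<close> by (simp add: row_def)
  qed
  moreover have "\<forall>x\<in>set l. 0 < x"
  proof
    fix x assume "x \<in> set l"
    then obtain a where "a < length l" "l ! a = x" by (auto simp: in_set_conv_nth)
    then show "0 < x" using h[THEN conjunct2, rule_format, of "a + 1"] by (simp add: row_def)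
  qed
  ultimately show "young l" by (simp add: young_def)
qed

lemma young_row_antimono: "young l \<Longrightarrow> 1 \<le> i \<Longrightarrow> i \<le> j \<Longrightarrow> row l j \<le> row l i"
  by (cases "j \<le> length l") (auto simp: young_iff_row row_eq_0)

lemma young_row_pos: "young l \<Longrightarrow> 1 \<le> i \<Longrightarrow> i \<le> length l \<Longrightarrow> 0 < row l i"
  by (auto simp: young_iff_row)

lemma young_eqI:
  assumes "young a" "young b" "\<And>i. row a i = row b i"
  shows "a = b"
proof -
  have len: "length a = length b"
  proof (rule ccontr)
    assume "length a \<noteq> length b"
    then consider "length a < length b" | "length b < length a" by linarith
    then show False
    proof cases
      case 1
      then have "0 < row b (length a + 1)" using young_row_pos[OF assms(2)] by simp
      then show False using assms(3) row_eq_0[of "length a + 1" a] by simp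
    next
      case 2
      then have "0 < row a (length b + 1)" using young_row_pos[OF assms(1)] by simp
      then show False using assms(3) row_eq_0[of "length b + 1" b] by simp
    qed
  qed
  show ?thesis
  proof (rule nth_equalityI[OF len])
    fix k assume "k < length a"
    then show "a ! k = b ! k" using assms(3)[of "k + 1"] len by (simp add: row_def)
  qed
qed

lemma le_card_downclosed_iff:
  fixes S :: "nat set"
  assumes fin: "finite S" and down: "\<And>i. i \<in> S \<Longrightarrow> 1 \<le> i \<and> {1..i} \<subseteq> S" and "1 \<le> i"
  shows "i \<le> card S \<longleftrightarrow> i \<in> S"
proof -
  have sub: "S \<subseteq> {1..card S}"
  proof
    fix i assume "i \<in> S"
    then have "{1..i} \<subseteq> S" "1 \<le> i" using down by auto
    then have "card {1..i} \<le> card S" using fin by (intro card_mono)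
    then show "i \<in> {1..card S}" using \<open>1 \<le> i\<close> by simp
  qed
  have eq: "{1..card S} = S" by (rule card_subset_eq[OF _ sub, symmetric]) auto
  show ?thesis
  proof
    assume "i \<le> card S"
    then have "i \<in> {1..card S}" using \<open>1 \<le> i\<close> by simp
    then show "i \<in> S" unfolding eq .
  qed (use sub in auto)
qed

lemma nat_eqI_by_lower_bounds: "(\<And>i. 1 \<le> i \<Longrightarrow> i \<le> x \<longleftrightarrow> i \<le> y) \<Longrightarrow> x = (y::nat)"
proof (rule antisym)
  assume h: "\<And>i. 1 \<le> i \<Longrightarrow> i \<le> x \<longleftrightarrow> i \<le> y"
  show "x \<le> y" using h[of x] by (cases "x = 0") auto
  show "y \<le> x" using h[of y] by (cases "y = 0") auto
qed

lemma frob_d_le_iff: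
  assumes y: "young l" and i: "1 \<le> i"
  shows "i \<le> frob_d l \<longleftrightarrow> i \<le> row l i"
proof -
  let ?S = "{i. 1 \<le> i \<and> i \<le> length l \<and> i \<le> row l i}"
  have "i \<le> card ?S \<longleftrightarrow> i \<in> ?S"
  proof (rule le_card_downclosed_iff[OF _ _ i])
    show "finite ?S" by (rule finite_subset[of _ "{..length l}"]) auto
    show "1 \<le> k \<and> {1..k} \<subseteq> ?S" if "k \<in> ?S" for k
    proof (intro conjI subsetI)
      fix h assume "h \<in> {1..k}"
      then show "h \<in> ?S" using that young_row_antimono[OF y, of h k] by auto
    qed (use that in simp)
  qed
  then have "i \<le> frob_d l \<longleftrightarrow> i \<in> ?S" by (simp only: frob_d_def)
  also have "\<dots> \<longleftrightarrow> i \<le> row l i" using i row_pos_bounds[of l i] by auto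
  finally show ?thesis .
qed

lemma col_ge_iff:
  assumes y: "young l" and i: "1 \<le> i" and j: "1 \<le> j"
  shows "i \<le> col l j \<longleftrightarrow> j \<le> row l i"
proof -
  let ?S = "{i. 1 \<le> i \<and> i \<le> length l \<and> j \<le> row l i}"
  have "i \<le> card ?S \<longleftrightarrow> i \<in> ?S"
  proof (rule le_card_downclosed_iff[OF _ _ i])
    show "finite ?S" by (rule finite_subset[of _ "{..length l}"]) auto
    show "1 \<le> k \<and> {1..k} \<subseteq> ?S" if "k \<in> ?S" for k
    proof (intro conjI subsetI)
      fix h assume "h \<in> {1..k}"
      then show "h \<in> ?S" using that young_row_antimono[OF y, of h k] by auto
    qed (use that in simp)
  qed
  then have "i \<le> col l j \<longleftrightarrow> i \<in> ?S" by (simp only: col_def)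
  also have "\<dots> \<longleftrightarrow> j \<le> row l i" using i j row_pos_bounds[of l i] by auto
  finally show ?thesis .
qed

lemma frob_d_le_length: "young l \<Longrightarrow> frob_d l \<le> length l"
  using frob_d_le_iff[of l "frob_d l"] row_pos_bounds[of l "frob_d l"] by (cases "frob_d l = 0") auto

lemma frob_p_after_diagonal: "young l \<Longrightarrow> frob_p l (frob_d l + 1) = 0"
  using frob_d_le_iff[of l "frob_d l + 1"] by (simp add: frob_p_def)

lemma frob_q_after_diagonal: "young l \<Longrightarrow> frob_q l (frob_d l + 1) = 0"
  using frob_d_le_iff[of l "frob_d l + 1"] col_ge_iff[of l "frob_d l + 1" "frob_d l + 1"]
  by (simp add: frob_q_def)

lemma nboxes_eq_sum_row:
  assumes "length l \<le> N"
  shows "nboxes l = (\<Sum>i\<in>{1..N}. row l i)"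
proof -
  have "(\<Sum>i\<in>{1..N}. row l i) = (\<Sum>k<N. row l (Suc k))" by (rule sum_atLeast1_atMost_shift)
  also have "\<dots> = (\<Sum>k<length l. row l (Suc k))"
    by (rule sum.mono_neutral_right) (use assms in \<open>auto simp: row_def\<close>)
  also have "\<dots> = sum_list l"
    by (simp add: row_def sum_list_sum_nth atLeast0LessThan)
  finally show ?thesis by (simp add: nboxes_def)
qed

section \<open>Adding a box\<close>

definition addable_rows :: "nat list \<Rightarrow> nat set" where
  "addable_rows l = {r. 1 \<le> r \<and> r \<le> length l + 1 \<and> (r = 1 \<or> row l r < row l (r - 1))}"

definition add_box :: "nat list \<Rightarrow> nat \<Rightarrow> nat list" where
  "add_box l r = (if r \<le> length l then l[r - 1 := l ! (r - 1) + 1] else l @ [1])"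

lemma finite_addable_rows: "finite (addable_rows l)"
  by (rule finite_subset[of _ "{..length l + 1}"]) (auto simp: addable_rows_def)

lemma addable_rowsD:
  assumes "r \<in> addable_rows l"
  shows "1 \<le> r" "r \<le> length l + 1" "r = 1 \<or> row l r < row l (r - 1)"
  using assms by (auto simp: addable_rows_def)

lemma row_add_box:
  assumes "1 \<le> r" "r \<le> length l + 1"
  shows "row (add_box l r) i = (if i = r then row l r + 1 else row l i)"
proof (cases "r \<le> length l")
  case True
  then show ?thesis using assms by (auto simp: add_box_def row_def nth_list_update)
next
  case False
  then have "r = length l + 1" using assms by simp
  then show ?thesis by (auto simp: add_box_def row_def nth_append)
qed

lemma young_add_box:
  assumes y: "young l" and r: "r \<in> addable_rows l"
  shows "young (add_box l r)"
proof -
  note r_bounds = addable_rowsD[OF r]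
  note rows = row_add_box[OF r_bounds(1,2)]
  have length: "length (add_box l r) \<le> length l + 1" "i \<le> length (add_box l r) \<Longrightarrow> i \<noteq> r \<Longrightarrow> i \<le> length l" for i
    using r_bounds(2) by (auto simp: add_box_def split: if_splits)
  show ?thesis unfolding young_iff_row
  proof (intro conjI allI impI)
    fix i j assume ij: "1 \<le> i" "i \<le> j" "j \<le> length (add_box l r)"
    show "row (add_box l r) j \<le> row (add_box l r) i"
    proof (cases "j = r \<and> i \<noteq> j")
      case True
      then have "i \<le> r - 1" "r \<noteq> 1" using ij by auto
      then have "row l r < row l i" using young_row_antimono[OF y ij(1), of "r - 1"] r_bounds(3) by auto
      then show ?thesis unfolding rows using True by auto
    next
      case False
      then show ?thesis using ij young_row_antimono[OF y ij(1,2)] unfolding rows by auto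
    qed
  next
    fix i assume i: "1 \<le> i" "i \<le> length (add_box l r)"
    then show "0 < row (add_box l r) i"
      unfolding rows using young_row_pos[OF y i(1)] length(2)[OF i(2)] by auto
  qed
qed

lemma nboxes_add_box:
  assumes r: "r \<in> addable_rows l"
  shows "nboxes (add_box l r) = nboxes l + 1"
proof -
  note r_bounds = addable_rowsD[OF r]
  have "nboxes (add_box l r) = (\<Sum>i\<in>{1..length l + 1}. row (add_box l r) i)"
    by (rule nboxes_eq_sum_row) (simp add: add_box_def)
  also have "\<dots> = (\<Sum>i\<in>{1..length l + 1}. row l i + (if i = r then 1 else 0))"
    by (rule sum.cong) (simp_all add: row_add_box[OF r_bounds(1,2)])
  also have "\<dots> = nboxes l + 1"
    using r_bounds(1,2) by (simp add: sum.distrib nboxes_eq_sum_row[of l "length l + 1"])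
  finally show ?thesis .
qed

lemma adds_box_add_box: "young l \<Longrightarrow> r \<in> addable_rows l \<Longrightarrow> adds_box l (add_box l r)"
  unfolding adds_box_def
  by (simp add: young_add_box nboxes_add_box row_add_box[OF addable_rowsD(1,2)])

lemma adds_box_rows:
  assumes "adds_box l \<nu>"
  obtains r where "1 \<le> r" "\<And>i. row \<nu> i = (if i = r then row l r + 1 else row l i)"
proof -
  have le: "\<And>i. row l i \<le> row \<nu> i" and nb: "nboxes \<nu> = nboxes l + 1"
    using assms by (auto simp: adds_box_def)
  define N where "N = length l + length \<nu>"
  have "(\<Sum>i\<in>{1..N}. row \<nu> i) = (\<Sum>i\<in>{1..N}. row l i) + 1"
    using nb nboxes_eq_sum_row[of l N] nboxes_eq_sum_row[of \<nu> N] by (simp add: N_def)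
  then have "(\<Sum>i\<in>{1..N}. row \<nu> i - row l i) = 1"
    using le by (simp add: sum_subtractf_nat)
  then have "\<exists>r\<in>{1..N}. row \<nu> r - row l r = 1 \<and> (\<forall>i\<in>{1..N}. r \<noteq> i \<longrightarrow> row \<nu> i - row l i = 0)"
    by (simp only: sum_eq_1_iff[OF finite_atLeastAtMost])
  then obtain r where r: "r \<in> {1..N}" "row \<nu> r - row l r = 1"
    and others: "\<forall>i\<in>{1..N}. r \<noteq> i \<longrightarrow> row \<nu> i - row l i = 0"
    by blast
  have rows: "row \<nu> i = (if i = r then row l r + 1 else row l i)" for i
  proof (cases "i \<in> {1..N}")
    case True
    then show ?thesis using r others le[of i] le[of r] by force
  next
    case False
    then have "row \<nu> i = 0" "row l i = 0" by (auto simp: row_eq_0 N_def)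
    then show ?thesis using False r(1) by auto
  qed
  show ?thesis by (rule that[OF _ rows]) (use r(1) in simp)
qed

lemma adds_box_imp_add_box:
  assumes y: "young l" and "adds_box l \<nu>"
  shows "\<exists>r\<in>addable_rows l. \<nu> = add_box l r"
proof -
  obtain r where r1: "1 \<le> r" and row\<nu>: "\<And>i. row \<nu> i = (if i = r then row l r + 1 else row l i)"
    using adds_box_rows[OF assms(2)] by blast
  have y\<nu>: "young \<nu>" using assms(2) by (simp add: adds_box_def)
  have r_corner: "r = 1 \<or> row l r < row l (r - 1)"
  proof (cases "r = 1")
    case False
    then have "row \<nu> r \<le> row \<nu> (r - 1)" using young_row_antimono[OF y\<nu>, of "r - 1" r] r1 by simp
    then show ?thesis using row\<nu>[of r] row\<nu>[of "r - 1"] r1 False by (auto split: if_splits)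
  qed simp
  have "r \<le> length l + 1"
  proof (rule ccontr)
    assume "\<not> ?thesis"
    then have "row l (r - 1) = 0" "r \<noteq> 1" by (auto simp: row_eq_0)
    then show False using r_corner by simp
  qed
  then have r_addable: "r \<in> addable_rows l" using r1 r_corner by (simp add: addable_rows_def)
  have "\<nu> = add_box l r"
    by (rule young_eqI[OF y\<nu> young_add_box[OF y r_addable]])
      (simp add: row\<nu> row_add_box[OF addable_rowsD(1,2)[OF r_addable]])
  then show ?thesis using r_addable by blast
qed

lemma adds_box_eq_image_add_box: "young l \<Longrightarrow> {\<nu>. adds_box l \<nu>} = add_box l ` addable_rows l"
  using adds_box_imp_add_box adds_box_add_box by blast

lemma inj_on_add_box: "inj_on (add_box l) (addable_rows l)"
proof
  fix r s assume r: "r \<in> addable_rows l" and s: "s \<in> addable_rows l" and "add_box l r = add_box l s"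
  then have "row (add_box l r) r = row (add_box l s) r" by simp
  then show "r = s" using r s by (auto simp: row_add_box addable_rows_def split: if_splits)
qed

definition frob_size :: "nat list \<Rightarrow> nat" where
  "frob_size l = (\<Sum>i\<in>{1..frob_d l}. frob_p l i + frob_q l i + 1)"

context
  fixes l :: "nat list" and r :: nat
  assumes young: "young l" and addable: "r \<in> addable_rows l"
begin

lemma row_add_box_addable: "row (add_box l r) i = (if i = r then row l r + 1 else row l i)"
  using row_add_box[OF addable_rowsD(1,2)[OF addable]] .

lemma col_after_addable_row: "col l (row l r + 1) = r - 1"
proof (rule nat_eqI_by_lower_bounds)
  fix i :: nat assume i: "1 \<le> i"
  note r = addable_rowsD[OF addable]
  have "i \<le> col l (row l r + 1) \<longleftrightarrow> row l r + 1 \<le> row l i"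
    by (simp add: col_ge_iff[OF young i])
  also have "\<dots> \<longleftrightarrow> i \<le> r - 1"
  proof
    assume "row l r + 1 \<le> row l i"
    then show "i \<le> r - 1" using young_row_antimono[OF young r(1), of i] by (cases "r \<le> i") auto
  next
    assume "i \<le> r - 1"
    then show "row l r + 1 \<le> row l i" using i r(3) young_row_antimono[OF young i, of "r - 1"] by auto
  qed
  finally show "i \<le> col l (row l r + 1) \<longleftrightarrow> i \<le> r - 1" .
qed

lemma col_add_box_addable:
  assumes j: "1 \<le> j"
  shows "col (add_box l r) j = (if j = row l r + 1 then r else col l j)"
proof (rule nat_eqI_by_lower_bounds)
  fix i :: nat assume i: "1 \<le> i"
  have "i \<le> col (add_box l r) j \<longleftrightarrow> (if i = r then j \<le> row l r + 1 else j \<le> row l i)"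
    using col_ge_iff[OF young_add_box[OF young addable] i j] by (simp add: row_add_box_addable)
  also have "\<dots> \<longleftrightarrow> (if j = row l r + 1 then i \<le> r else i \<le> col l j)"
    using col_ge_iff[OF young i j] col_ge_iff[OF young i, of "row l r + 1"]
      col_after_addable_row addable_rowsD(1)[OF addable]
    by (cases "i = r") (auto simp: col_ge_iff[OF young i j])
  finally show "i \<le> col (add_box l r) j \<longleftrightarrow> i \<le> (if j = row l r + 1 then r else col l j)"
    by simp
qed

lemma frob_q_add_box:
  "1 \<le> j \<Longrightarrow> frob_q (add_box l r) j = (if j = row l r + 1 then r - j else frob_q l j)"
  by (simp add: frob_q_def col_add_box_addable)

lemma frob_q_after_addable_row: "frob_q l (row l r + 1) = r - 1 - (row l r + 1)"
  unfolding frob_q_def col_after_addable_row ..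

lemma addable_row_beyond_diagonal:
  assumes "frob_d l < r" "frob_d l < row l r + 1"
  shows "r = frob_d l + 1" "row l r = frob_d l"
proof -
  let ?d = "frob_d l"
  have not_diag: "\<not> ?d + 1 \<le> row l (?d + 1)" using frob_d_le_iff[OF young, of "?d + 1"] by simp
  have "row l r \<le> row l (?d + 1)" using young_row_antimono[OF young, of "?d + 1" r] assms by simp
  then show row: "row l r = ?d" using assms not_diag by simp
  show "r = ?d + 1"
  proof (rule ccontr)
    assume "r \<noteq> ?d + 1"
    then have "row l (r - 1) \<le> row l (?d + 1)" "row l r < row l (r - 1)"
      using young_row_antimono[OF young, of "?d + 1" "r - 1"] addable_rowsD(3)[OF addable] assms(1)
      by auto
    then show False using row not_diag by simp
  qed
qed

lemma frob_add_box_arm: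
  assumes "r \<le> frob_d l"
  shows "frob_d (add_box l r) = frob_d l"
    and "frob_p (add_box l r) = (frob_p l)(r := frob_p l r + 1)"
    and "1 \<le> j \<Longrightarrow> frob_q (add_box l r) j = frob_q l j"
proof -
  have r: "r \<le> row l r" using frob_d_le_iff[OF young addable_rowsD(1)[OF addable]] assms by simp
  show "frob_d (add_box l r) = frob_d l"
  proof (rule nat_eqI_by_lower_bounds)
    fix i :: nat assume i: "1 \<le> i"
    show "i \<le> frob_d (add_box l r) \<longleftrightarrow> i \<le> frob_d l"
      unfolding frob_d_le_iff[OF young_add_box[OF young addable] i] frob_d_le_iff[OF young i]
        row_add_box_addable
      using r by auto
  qed
  show "frob_p (add_box l r) = (frob_p l)(r := frob_p l r + 1)"
    using r by (auto simp: frob_p_def row_add_box_addable Suc_diff_le)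
  show "frob_q (add_box l r) j = frob_q l j" if "1 \<le> j"
    using r that frob_q_after_addable_row by (auto simp: frob_q_add_box)
qed

lemma frob_add_box_leg:
  assumes "frob_d l < r" "row l r + 1 \<le> frob_d l"
  shows "frob_d (add_box l r) = frob_d l"
    and "frob_p (add_box l r) = frob_p l"
    and "1 \<le> j \<Longrightarrow> frob_q (add_box l r) j = ((frob_q l)(row l r + 1 := frob_q l (row l r + 1) + 1)) j"
proof -
  show "frob_d (add_box l r) = frob_d l"
  proof (rule nat_eqI_by_lower_bounds)
    fix i :: nat assume i: "1 \<le> i"
    show "i \<le> frob_d (add_box l r) \<longleftrightarrow> i \<le> frob_d l"
      unfolding frob_d_le_iff[OF young_add_box[OF young addable] i] frob_d_le_iff[OF young i]
        row_add_box_addable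
      using assms by auto
  qed
  show "frob_p (add_box l r) = frob_p l"
    using assms by (auto simp: fun_eq_iff frob_p_def row_add_box_addable)
  show "frob_q (add_box l r) j = ((frob_q l)(row l r + 1 := frob_q l (row l r + 1) + 1)) j" if "1 \<le> j"
    using assms that frob_q_after_addable_row by (auto simp: frob_q_add_box)
qed

lemma frob_add_box_diagonal:
  assumes "r = frob_d l + 1" "row l r = frob_d l"
  shows "frob_d (add_box l r) = frob_d l + 1"
    and "frob_p (add_box l r) = frob_p l"
    and "1 \<le> j \<Longrightarrow> frob_q (add_box l r) j = frob_q l j"
proof -
  show "frob_d (add_box l r) = frob_d l + 1"
  proof (rule nat_eqI_by_lower_bounds)
    fix i :: nat assume i: "1 \<le> i"
    show "i \<le> frob_d (add_box l r) \<longleftrightarrow> i \<le> frob_d l + 1"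
      unfolding frob_d_le_iff[OF young_add_box[OF young addable] i] row_add_box_addable
      using frob_d_le_iff[OF young i] assms by auto
  qed
  have corner: "row l r + 1 = r" using assms by simp
  then show "frob_p (add_box l r) = frob_p l"
    by (auto simp: fun_eq_iff frob_p_def row_add_box_addable)
  show "frob_q (add_box l r) j = frob_q l j" if "1 \<le> j"
    using corner that frob_q_after_addable_row by (auto simp: frob_q_add_box)
qed

lemma frob_size_add_box: "frob_size (add_box l r) = frob_size l + 1"
proof -
  let ?d = "frob_d l" and ?p = "frob_p l" and ?q = "frob_q l"
  have bump: "(\<Sum>i\<in>{1..?d}. g i + (if i = k then 1 else 0)) = sum g {1..?d} + 1"
    if "k \<in> {1..?d}" for g :: "nat \<Rightarrow> nat" and k
    using that by (simp add: sum.distrib)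
  consider "r \<le> ?d" | "?d < r" "row l r + 1 \<le> ?d" | "r = ?d + 1" "row l r = ?d"
    using addable_row_beyond_diagonal by fastforce
  then show ?thesis
  proof cases
    case 1
    have "frob_size (add_box l r) = (\<Sum>i\<in>{1..?d}. ?p i + ?q i + 1 + (if i = r then 1 else 0))"
      unfolding frob_size_def frob_add_box_arm[OF 1] by (intro sum.cong) (simp_all add: frob_add_box_arm(3)[OF 1])
    also have "\<dots> = frob_size l + 1"
      unfolding frob_size_def by (rule bump) (use 1 addable_rowsD(1)[OF addable] in auto)
    finally show ?thesis .
  next
    case 2
    have "frob_size (add_box l r)
        = (\<Sum>i\<in>{1..?d}. ?p i + ?q i + 1 + (if i = row l r + 1 then 1 else 0))"
      unfolding frob_size_def frob_add_box_leg[OF 2] by (intro sum.cong) (simp_all add: frob_add_box_leg(3)[OF 2])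
    also have "\<dots> = frob_size l + 1"
      unfolding frob_size_def by (rule bump) (use 2 in auto)
    finally show ?thesis .
  next
    case 3
    have "frob_size (add_box l r) = (\<Sum>i\<in>{1..?d + 1}. ?p i + ?q i + 1)"
      unfolding frob_size_def frob_add_box_diagonal[OF 3] by (intro sum.cong) (simp_all add: frob_add_box_diagonal(3)[OF 3])
    then show ?thesis
      using frob_p_after_diagonal[OF young] frob_q_after_diagonal[OF young] by (simp add: frob_size_def)
  qed
qed

end

lemma young_snoc_eq_add_box:
  assumes y: "young (xs @ [x])"
  obtains l' r where "young l'" "r \<in> addable_rows l'" "xs @ [x] = add_box l' r"
proof -
  have xs: "young xs" and x: "0 < x" and below: "\<forall>a\<in>set xs. x \<le> a"
    using y by (auto simp: young_def sorted_wrt_append)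
  let ?k = "length xs + 1"
  show ?thesis
  proof (cases "x = 1")
    case True
    have "xs \<noteq> [] \<Longrightarrow> 0 < row xs (length xs)"
      using young_row_pos[OF xs, of "length xs"] by (simp add: Suc_le_eq)
    then have "?k \<in> addable_rows xs" by (cases "xs = []") (auto simp: addable_rows_def row_eq_0)
    moreover have "xs @ [x] = add_box xs ?k" using True by (simp add: add_box_def)
    ultimately show ?thesis using that xs by blast
  next
    case False
    let ?l = "xs @ [x - 1]"
    have "young ?l" using y x False by (auto simp: young_def sorted_wrt_append)
    moreover have "?k \<in> addable_rows ?l"
    proof (cases "xs = []")
      case False
      then have "x \<le> row ?l (length xs)"
        using below nth_mem[of "length xs - 1" xs] by (auto simp: row_def nth_append Suc_le_eq)
      then have "row ?l ?k < row ?l (?k - 1)" using x by (simp add: row_def)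
      then show ?thesis by (simp add: addable_rows_def)
    qed (simp add: addable_rows_def)
    moreover have "xs @ [x] = add_box ?l ?k" using x by (simp add: add_box_def list_update_append)
    ultimately show ?thesis using that by blast
  qed
qed

lemma nboxes_eq_frob_size: "young l \<Longrightarrow> nboxes l = frob_size l"
proof (induction "nboxes l" arbitrary: l rule: less_induct)
  case less
  show ?case
  proof (cases l rule: rev_cases)
    case Nil
    then show ?thesis by (simp add: nboxes_def frob_size_def frob_d_def)
  next
    case (snoc xs x)
    then obtain l' r where l': "young l'" "r \<in> addable_rows l'" and l: "l = add_box l' r"
      using young_snoc_eq_add_box less.prems by metis
    have "nboxes l = nboxes l' + 1" using nboxes_add_box[OF l'(2)] l by simp
    moreover have "frob_size l = frob_size l' + 1" using frob_size_add_box[OF l'] l by simp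
    moreover have "nboxes l' = frob_size l'" using less.hyps[of l'] \<open>nboxes l = nboxes l' + 1\<close> l'(1) by simp
    ultimately show ?thesis by simp
  qed
qed

section \<open>Shifted Frobenius determinants\<close>

lemma det_frob_mat_eq_rows:
  fixes m :: "nat \<Rightarrow> nat \<Rightarrow> 'a :: comm_ring_1"
  assumes "1 \<le> a" "a < b" "b \<le> k" "P a = P b"
  shows "det (frob_mat m k P Q) = 0"
proof (rule det_identical_rows[of _ k "a - 1" "b - 1"])
  show "Matrix.row (frob_mat m k P Q) (a - 1) = Matrix.row (frob_mat m k P Q) (b - 1)"
    by (rule eq_vecI) (use assms in \<open>auto simp: frob_mat_def Matrix.row_def\<close>)
qed (use assms in \<open>auto simp: frob_mat_def\<close>)

lemma det_frob_mat_eq_cols: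
  fixes m :: "nat \<Rightarrow> nat \<Rightarrow> 'a :: comm_ring_1"
  assumes "1 \<le> a" "a < b" "b \<le> k" "Q a = Q b"
  shows "det (frob_mat m k P Q) = 0"
proof (rule det_identical_columns[of _ k "a - 1" "b - 1"])
  show "Matrix.col (frob_mat m k P Q) (a - 1) = Matrix.col (frob_mat m k P Q) (b - 1)"
    by (rule eq_vecI) (use assms in \<open>auto simp: frob_mat_def Matrix.col_def\<close>)
qed (use assms in \<open>auto simp: frob_mat_def\<close>)

text \<open>At a position that is not addable two consecutive rows (or columns) of the diagram have
  equal length, so the shifted matrix has two equal rows (or columns).\<close>

lemma det_frob_mat_arm_not_addable:
  fixes m :: "nat \<Rightarrow> nat \<Rightarrow> 'a :: comm_ring_1"
  assumes y: "young l" and i: "i \<in> {1..frob_d l}" and not_addable: "i \<notin> addable_rows l"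
  shows "det (frob_mat m (frob_d l) ((frob_p l)(i := frob_p l i + 1)) (frob_q l)) = 0"
proof -
  have i1: "1 \<le> i" and id: "i \<le> frob_d l" using i by auto
  have i_row: "i \<le> row l i" using frob_d_le_iff[OF y i1] id by simp
  have "i \<le> length l" using id frob_d_le_length[OF y] by linarith
  then have "i \<noteq> 1" "\<not> row l i < row l (i - 1)" using not_addable i1 by (auto simp: addable_rows_def)
  moreover have "row l i \<le> row l (i - 1)" using young_row_antimono[OF y, of "i - 1" i] i1 \<open>i \<noteq> 1\<close> by simp
  ultimately have "row l (i - 1) = row l i" "1 \<le> i - 1" "i - 1 < i" using i1 by linarith+
  moreover have "((frob_p l)(i := frob_p l i + 1)) (i - 1) = ((frob_p l)(i := frob_p l i + 1)) i"
    using calculation i_row by (simp add: frob_p_def Suc_diff_le)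
  ultimately show ?thesis using det_frob_mat_eq_rows id by blast
qed

lemma col_pred_eq_col:
  assumes y: "young l" and short: "row l (col l j + 1) + 1 < j"
  shows "col l (j - 1) = col l j"
proof (rule nat_eqI_by_lower_bounds)
  fix i :: nat assume i: "1 \<le> i"
  have j: "1 \<le> j - 1" "1 \<le> j" using short by linarith+
  have "i \<le> col l (j - 1) \<longleftrightarrow> j - 1 \<le> row l i" by (rule col_ge_iff[OF y i j(1)])
  also have "\<dots> \<longleftrightarrow> j \<le> row l i"
  proof
    assume h: "j - 1 \<le> row l i"
    show "j \<le> row l i"
    proof (rule ccontr)
      assume "\<not> j \<le> row l i"
      then have "col l j + 1 \<le> i" using col_ge_iff[OF y i j(2)] by simp
      then have "row l i \<le> row l (col l j + 1)" using young_row_antimono[OF y] by simp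
      then show False using h short by linarith
    qed
  qed simp
  also have "\<dots> \<longleftrightarrow> i \<le> col l j" using col_ge_iff[OF y i j(2)] by simp
  finally show "i \<le> col l (j - 1) \<longleftrightarrow> i \<le> col l j" .
qed

lemma det_frob_mat_leg_not_addable:
  fixes m :: "nat \<Rightarrow> nat \<Rightarrow> 'a :: comm_ring_1"
  assumes y: "young l" and j: "j \<in> {1..frob_d l}"
    and not_addable: "\<forall>r\<in>addable_rows l. frob_d l < r \<longrightarrow> row l r + 1 \<noteq> j"
  shows "det (frob_mat m (frob_d l) (frob_p l) ((frob_q l)(j := frob_q l j + 1))) = 0"
proof -
  let ?d = "frob_d l"
  have j1: "1 \<le> j" and jd: "j \<le> ?d" using j by auto
  have d1: "1 \<le> ?d" using j1 jd by linarith
  define r where "r = col l j + 1"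
  have "j \<le> row l ?d" using frob_d_le_iff[OF y d1] jd by simp
  then have dc: "?d \<le> col l j" using col_ge_iff[OF y d1 j1] by simp
  then have c1: "1 \<le> col l j" using d1 by linarith
  have r_prev: "j \<le> row l (r - 1)" using col_ge_iff[OF y c1 j1] by (simp add: r_def)
  have r_row: "row l r < j" using col_ge_iff[OF y _ j1, of r] by (simp add: r_def)
  have "row l r + 1 \<noteq> j"
  proof
    assume corner: "row l r + 1 = j"
    have "0 < row l (r - 1)" using r_prev j1 by linarith
    then have "r \<le> length l + 1" using row_pos_bounds[of l "r - 1"] by linarith
    then have "r \<in> addable_rows l" using c1 r_row r_prev by (simp add: addable_rows_def r_def)
    moreover have "?d < r" using dc by (simp add: r_def)
    ultimately show False using not_addable corner by blast
  qed
  then have "col l (j - 1) = col l j" using r_row by (intro col_pred_eq_col[OF y]) (simp add: r_def)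
  moreover have "j \<le> col l j" "1 \<le> j - 1" "j - 1 < j" using dc jd \<open>row l r + 1 \<noteq> j\<close> r_row by linarith+
  ultimately have "((frob_q l)(j := frob_q l j + 1)) (j - 1) = ((frob_q l)(j := frob_q l j + 1)) j"
    by (simp add: frob_q_def Suc_diff_le)
  then show ?thesis using det_frob_mat_eq_cols \<open>1 \<le> j - 1\<close> \<open>j - 1 < j\<close> jd by blast
qed

lemma det_frob_mat_diagonal_not_addable:
  fixes m :: "nat \<Rightarrow> nat \<Rightarrow> 'a :: comm_ring_1"
  assumes y: "young l"
    and not_addable: "\<not> (frob_d l + 1 \<in> addable_rows l \<and> row l (frob_d l + 1) = frob_d l)"
  shows "det (frob_mat m (frob_d l + 1) (frob_p l) (frob_q l)) = 0"
proof -
  let ?d = "frob_d l"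
  have below: "row l (?d + 1) < ?d + 1" using frob_d_le_iff[OF y, of "?d + 1"] by simp
  show ?thesis
  proof (cases "row l (?d + 1) = ?d")
    case False
    then have short: "row l (?d + 1) < ?d" using below by linarith
    then have d1: "1 \<le> ?d" by linarith
    have "col l ?d = ?d"
    proof (rule nat_eqI_by_lower_bounds)
      fix i :: nat assume i: "1 \<le> i"
      have "?d \<le> row l i \<longleftrightarrow> i \<le> ?d"
        using young_row_antimono[OF y, of "?d + 1" i] young_row_antimono[OF y i, of ?d]
          frob_d_le_iff[OF y d1] short
        by (cases "i \<le> ?d") auto
      then show "i \<le> col l ?d \<longleftrightarrow> i \<le> ?d" by (simp add: col_ge_iff[OF y i d1])
    qed
    then have "frob_q l ?d = frob_q l (?d + 1)" using frob_q_after_diagonal[OF y] by (simp add: frob_q_def)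
    then show ?thesis by (rule det_frob_mat_eq_cols[OF d1, rotated 2]) simp_all
  next
    case True
    have "?d + 1 \<le> length l + 1" using frob_d_le_length[OF y] by linarith
    then have "?d + 1 \<noteq> 1" "\<not> row l (?d + 1) < row l ?d"
      using not_addable True by (auto simp: addable_rows_def)
    moreover have "row l (?d + 1) \<le> row l ?d" using young_row_antimono[OF y, of ?d] calculation(1) by simp
    ultimately have d1: "1 \<le> ?d" and "row l ?d = ?d" using True by linarith+
    then have "frob_p l ?d = frob_p l (?d + 1)" using frob_p_after_diagonal[OF y] by (simp add: frob_p_def)
    then show ?thesis by (rule det_frob_mat_eq_rows[OF d1, rotated 2]) simp_all
  qed
qed

lemma inj_on_row_addable_rows:
  assumes y: "young l"
  shows "inj_on (row l) (addable_rows l)"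
proof -
  have decreasing: "row l s < row l r" if "r \<in> addable_rows l" "s \<in> addable_rows l" "r < s" for r s
  proof -
    have "s \<noteq> 1" "row l s < row l (s - 1)" using that by (auto simp: addable_rows_def)
    moreover have "row l (s - 1) \<le> row l r"
      using young_row_antimono[OF y, of r "s - 1"] that by (auto simp: addable_rows_def)
    ultimately show ?thesis by simp
  qed
  show ?thesis
  proof (rule inj_onI)
    fix r s assume "r \<in> addable_rows l" "s \<in> addable_rows l" "row l r = row l s"
    then show "r = s" using decreasing[of r s] decreasing[of s r] by (cases r s rule: linorder_cases) auto
  qed
qed

definition frob_det :: "(nat \<Rightarrow> nat \<Rightarrow> 'a :: comm_ring_1) \<Rightarrow> nat list \<Rightarrow> 'a" where
  "frob_det m l = det (frob_mat m (frob_d l) (frob_p l) (frob_q l))"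

lemma sum_frob_det_add_box_arm:
  assumes y: "young l"
  shows "(\<Sum>r\<in>{r \<in> addable_rows l. r \<le> frob_d l}. frob_det m (add_box l r))
       = (\<Sum>i\<in>{1..frob_d l}. det (frob_mat m (frob_d l) ((frob_p l)(i := frob_p l i + 1)) (frob_q l)))"
    (is "?lhs = (\<Sum>i\<in>_. ?X i)")
proof -
  have "frob_det m (add_box l r) = ?X r" if "r \<in> addable_rows l" "r \<le> frob_d l" for r
    unfolding frob_det_def frob_add_box_arm(1,2)[OF y that]
    by (rule arg_cong[where f = det], rule frob_mat_cong) (simp_all add: frob_add_box_arm(3)[OF y that])
  then have "?lhs = (\<Sum>r\<in>{r \<in> addable_rows l. r \<le> frob_d l}. ?X r)" by (intro sum.cong) auto
  also have "\<dots> = (\<Sum>i\<in>{1..frob_d l}. ?X i)"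
  proof (rule sum.mono_neutral_left)
    show "{r \<in> addable_rows l. r \<le> frob_d l} \<subseteq> {1..frob_d l}" by (auto simp: addable_rows_def)
    show "\<forall>i\<in>{1..frob_d l} - {r \<in> addable_rows l. r \<le> frob_d l}. ?X i = 0"
    proof
      fix i assume "i \<in> {1..frob_d l} - {r \<in> addable_rows l. r \<le> frob_d l}"
      then show "?X i = 0" by (intro det_frob_mat_arm_not_addable[OF y]) auto
    qed
  qed simp
  finally show ?thesis .
qed

lemma sum_frob_det_add_box_leg:
  assumes y: "young l"
  shows "(\<Sum>r\<in>{r \<in> addable_rows l. frob_d l < r \<and> row l r + 1 \<le> frob_d l}. frob_det m (add_box l r))
       = (\<Sum>j\<in>{1..frob_d l}. det (frob_mat m (frob_d l) (frob_p l) ((frob_q l)(j := frob_q l j + 1))))"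
    (is "(\<Sum>r\<in>?R. _) = (\<Sum>j\<in>_. ?Y j)")
proof -
  let ?c = "\<lambda>r. row l r + 1"
  have "frob_det m (add_box l r) = ?Y (?c r)" if "r \<in> addable_rows l" "frob_d l < r" "?c r \<le> frob_d l" for r
    unfolding frob_det_def frob_add_box_leg(1,2)[OF y that]
    by (rule arg_cong[where f = det], rule frob_mat_cong) (simp_all add: frob_add_box_leg(3)[OF y that])
  then have "(\<Sum>r\<in>?R. frob_det m (add_box l r)) = (\<Sum>r\<in>?R. ?Y (?c r))" by (intro sum.cong) auto
  also have "\<dots> = (\<Sum>j\<in>?c ` ?R. ?Y j)"
  proof (rule sum.reindex[symmetric, unfolded comp_def])
    have "inj_on ?c (addable_rows l)"
      using inj_on_row_addable_rows[OF y] by (simp add: inj_on_def)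
    then show "inj_on ?c ?R" by (rule inj_on_subset) blast
  qed
  also have "\<dots> = (\<Sum>j\<in>{1..frob_d l}. ?Y j)"
  proof (rule sum.mono_neutral_left)
    show "\<forall>j\<in>{1..frob_d l} - ?c ` ?R. ?Y j = 0"
    proof
      fix j assume j: "j \<in> {1..frob_d l} - ?c ` ?R"
      have "row l r + 1 \<noteq> j" if "r \<in> addable_rows l" "frob_d l < r" for r
      proof
        assume "row l r + 1 = j"
        then have "j \<in> ?c ` ?R" using that j by auto
        then show False using j by blast
      qed
      then show "?Y j = 0" using j by (intro det_frob_mat_leg_not_addable[OF y]) auto
    qed
  qed auto
  finally show ?thesis .
qed

lemma sum_frob_det_add_box_diagonal:
  assumes y: "young l"
  shows "(\<Sum>r\<in>{r \<in> addable_rows l. frob_d l < r \<and> frob_d l < row l r + 1}. frob_det m (add_box l r))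
       = det (frob_mat m (frob_d l + 1) (frob_p l) (frob_q l))"
proof -
  let ?C = "{r \<in> addable_rows l. frob_d l < r \<and> frob_d l < row l r + 1}"
  have C: "?C \<subseteq> {frob_d l + 1}" and diagonal_box: "r \<in> ?C \<Longrightarrow> row l r = frob_d l" for r
    using addable_row_beyond_diagonal[OF y] by blast+
  show ?thesis
  proof (cases "?C = {}")
    case False
    then have "?C = {frob_d l + 1}" and addable: "frob_d l + 1 \<in> addable_rows l"
      using C by blast+
    moreover have "row l (frob_d l + 1) = frob_d l" using diagonal_box \<open>?C = {frob_d l + 1}\<close> by blast
    note diagonal = frob_add_box_diagonal[OF y addable refl this]
    have "frob_det m (add_box l (frob_d l + 1)) = det (frob_mat m (frob_d l + 1) (frob_p l) (frob_q l))"
      unfolding frob_det_def diagonal(1,2)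
      by (rule arg_cong[where f = det], rule frob_mat_cong) (rule refl, erule diagonal(3))
    then show ?thesis using \<open>?C = {frob_d l + 1}\<close> by simp
  next
    case True
    then have "\<not> (frob_d l + 1 \<in> addable_rows l \<and> row l (frob_d l + 1) = frob_d l)" by auto
    then have "det (frob_mat m (frob_d l + 1) (frob_p l) (frob_q l)) = 0"
      by (rule det_frob_mat_diagonal_not_addable[OF y])
    then show ?thesis unfolding True by simp
  qed
qed
lemma sum_frob_det_add_box:
  assumes y: "young l"
  shows "(\<Sum>r\<in>addable_rows l. frob_det m (add_box l r))
       = (\<Sum>i\<in>{1..frob_d l}. det (frob_mat m (frob_d l) ((frob_p l)(i := frob_p l i + 1)) (frob_q l)))
       + (\<Sum>j\<in>{1..frob_d l}. det (frob_mat m (frob_d l) (frob_p l) ((frob_q l)(j := frob_q l j + 1))))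
       + det (frob_mat m (frob_d l + 1) (frob_p l) (frob_q l))"
proof -
  let ?A = "{r \<in> addable_rows l. r \<le> frob_d l}"
    and ?B = "{r \<in> addable_rows l. frob_d l < r \<and> row l r + 1 \<le> frob_d l}"
    and ?C = "{r \<in> addable_rows l. frob_d l < r \<and> frob_d l < row l r + 1}"
  let ?g = "\<lambda>r. frob_det m (add_box l r)"
  have fin: "finite ?A" "finite ?B" "finite ?C" using finite_addable_rows by auto
  have "addable_rows l = ?A \<union> ?B \<union> ?C" by auto
  then have "sum ?g (addable_rows l) = sum ?g (?A \<union> ?B \<union> ?C)" by (rule arg_cong)
  also have "\<dots> = sum ?g (?A \<union> ?B) + sum ?g ?C"
    by (rule sum.union_disjoint) (use fin in auto)
  also have "sum ?g (?A \<union> ?B) = sum ?g ?A + sum ?g ?B"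
    by (rule sum.union_disjoint) (use fin in auto)
  finally have "sum ?g (addable_rows l) = sum ?g ?A + sum ?g ?B + sum ?g ?C" .
  then show ?thesis
    by (simp only: sum_frob_det_add_box_arm[OF y] sum_frob_det_add_box_leg[OF y]
        sum_frob_det_add_box_diagonal[OF y])
qed

theorem theorem8p1:
  fixes t :: complex and m :: "nat \<Rightarrow> nat \<Rightarrow> complex" and l :: "nat list"
  assumes t: "\<forall>k::nat. t \<noteq> - of_nat k"
    and rec: "\<forall>p q. m (p + 1) q + m p (q + 1) - of_nat (p + q + 1) * m p q = m p 0 * m 0 q"
    and m00: "m 0 0 = t"
    and yl: "young l"
  shows "phi m t l = (\<Sum>\<nu>\<in>{\<nu>. adds_box l \<nu>}. phi m t \<nu>)"
proof -
  let ?n = "nboxes l"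
  have phi: "phi m t k = frob_det m k / pochhammer t (nboxes k)" for k
    by (simp add: phi_def frob_det_def frob_mat_def)
  have rec': "m (p + 1) q + m p (q + 1) = of_nat (p + q + 1) * m p q + m p 0 * m 0 q" for p q
    using rec by (simp add: algebra_simps)
  have "(\<Sum>\<nu>\<in>{\<nu>. adds_box l \<nu>}. phi m t \<nu>) = (\<Sum>r\<in>addable_rows l. phi m t (add_box l r))"
    unfolding adds_box_eq_image_add_box[OF yl] by (rule sum.reindex[OF inj_on_add_box, unfolded comp_def])
  also have "\<dots> = (\<Sum>r\<in>addable_rows l. frob_det m (add_box l r)) / pochhammer t (?n + 1)"
    by (simp add: phi nboxes_add_box sum_divide_distrib)
  also have "(\<Sum>r\<in>addable_rows l. frob_det m (add_box l r)) = (of_nat ?n + t) * frob_det m l"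
    unfolding sum_frob_det_add_box[OF yl]
    unfolding nboxes_eq_frob_size[OF yl] frob_size_def frob_det_def m00[symmetric]
    by (intro det_frob_mat_recurrence rec' frob_p_after_diagonal[OF yl] frob_q_after_diagonal[OF yl])
  also have "pochhammer t (?n + 1) = (of_nat ?n + t) * pochhammer t ?n"
    by (simp add: pochhammer_rec' add.commute)
  also have "of_nat ?n + t \<noteq> 0"
    using t by (metis add_eq_0_iff)
  then have "(of_nat ?n + t) * frob_det m l / ((of_nat ?n + t) * pochhammer t ?n) = phi m t l"
    by (simp add: phi)
  finally show ?thesis ..
qed

end
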